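(* Let $M$ be a gasket automaton over $\Sigma=\{1,\dots,N\}$. For any $\mathbf x,\mathbf y,\mathbf z\in\Sigma^\infty$, $$\min\{T_M(\mathbf x,\mathbf y),T_M(\mathbf x,\mathbf z)\}\le T_M(\mathbf y,\mathbf z)+1.$$
   Context: A $\Sigma$-automaton $M$ has finite state set $Q=Q_0\cup\{Id,Exit\}$, input alphabet $\Sigma^2$, initial state $Id$, final state $Exit$, transition $\delta:Q\times\Sigma^2\to Q$ with $\delta(Id,(i,j))=Id$ iff $i=j$. Itinerary of $(\mathbf x,\mathbf y)\in\Sigma^\infty\times\Sigma^\infty$: $S_0=Id$, $S_k=\delta(S_{k-1},(x_k,y_k))$, stopped at $Exit$; surviving time $T_M(\mathbf x,\mathbf y)$ = largest $k$ with $S_k\neq Exit$ ($\infty$ if $Exit$ never reached; $\infty+1=\infty$). Triangle automaton: $\alpha,\beta,\gamma$ distinct elements of $\Sigma\cup\{-1,-2,-3\}$; $Q=\{S_{uv}:u\neq v\in\{\alpha,\beta,\gamma\}\}\cup\{Id,Exit\}$; $\delta(Id,(i,j))=S_{uv}\Rightarrow\delta(Id,(j,i))=S_{vu}$; $\delta(S_{uv},(i,j))=S_{uv}$ if $(i,j)=(v,u)$, else $Exit$. $\mathcal P_{uv}=\{(i,j):\delta(Id,(i,j))=S_{uv}\}$, $i\triangleleft_{uv}j$ iff $(i,j)\in\mathcal P_{uv}$ (iff $j\triangleleft_{vu}i$); $j$ is $uv$-minimal if there is no $i$ with $i\triangleleft_{uv}j$. Gasket automaton: triangle automaton with (Uniqueness)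 $i\triangleleft_{uv}j,i\triangleleft_{uv}j'\Rightarrow j=j'$; (Gathering) for $a,b,c\in\Sigma$ any two of $a\triangleleft_{\alpha\gamma}c$, $a\triangleleft_{\beta\gamma}b$, $b\triangleleft_{\alpha\beta}c$ imply the third; (Boundary) if $\alpha\in\Sigma$ it is $\alpha\gamma$- and $\alpha\beta$-minimal; if $\beta\in\Sigma$ it is $\beta\gamma$- and $\beta\alpha$-minimal; if $\gamma\in\Sigma$ it is $\gamma\alpha$- and $\gamma\beta$-minimal. *)

theory Defs
  imports Main "HOL-Library.Extended_Nat"
begin

datatype state = Id | Exit | S int int

(* The alphabet Sigma = {1,...,N}, letters as integers so that the labels
   alpha, beta, gamma may also be -1, -2, -3. *)
definition Sig :: "nat \<Rightarrow> int set" where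
  "Sig N = {1 .. int N}"

definition corners :: "int \<Rightarrow> int \<Rightarrow> int \<Rightarrow> int set" where
  "corners a b c = {a, b, c}"

definition Qset :: "int \<Rightarrow> int \<Rightarrow> int \<Rightarrow> state set" where
  "Qset a b c = {S u v | u v. u \<in> corners a b c \<and> v \<in> corners a b c \<and> u \<noteq> v} \<union> {Id, Exit}"

definition triangle_automaton ::
  "nat \<Rightarrow> int \<Rightarrow> int \<Rightarrow> int \<Rightarrow> (state \<Rightarrow> int \<times> int \<Rightarrow> state) \<Rightarrow> bool" where
  "triangle_automaton N a b c \<delta> \<longleftrightarrow>
     a \<noteq> b \<and> b \<noteq> c \<and> a \<noteq> c \<and>
     a \<in> Sig N \<union> {-1,-2,-3} \<and> b \<in> Sig N \<union> {-1,-2,-3} \<and> c \<in> Sig N \<union> {-1,-2,-3} \<and>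
     (\<forall>q \<in> Qset a b c. \<forall>i \<in> Sig N. \<forall>j \<in> Sig N. \<delta> q (i, j) \<in> Qset a b c) \<and>
     (\<forall>i \<in> Sig N. \<forall>j \<in> Sig N. \<delta> Id (i, j) = Id \<longleftrightarrow> i = j) \<and>
     (\<forall>i \<in> Sig N. \<forall>j \<in> Sig N. \<forall>u v. \<delta> Id (i, j) = S u v \<longrightarrow> \<delta> Id (j, i) = S v u) \<and>
     (\<forall>u \<in> corners a b c. \<forall>v \<in> corners a b c. u \<noteq> v \<longrightarrow>
        (\<forall>i \<in> Sig N. \<forall>j \<in> Sig N.
           \<delta> (S u v) (i, j) = (if (i, j) = (v, u) then S u v else Exit)))"

definition prec :: "nat \<Rightarrow> (state \<Rightarrow> int \<times> int \<Rightarrow> state) \<Rightarrow> int \<Rightarrow> int \<Rightarrow> int \<Rightarrow> int \<Rightarrow> bool" where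
  "prec N \<delta> u v i j \<longleftrightarrow> i \<in> Sig N \<and> j \<in> Sig N \<and> \<delta> Id (i, j) = S u v"

definition uv_minimal :: "nat \<Rightarrow> (state \<Rightarrow> int \<times> int \<Rightarrow> state) \<Rightarrow> int \<Rightarrow> int \<Rightarrow> int \<Rightarrow> bool" where
  "uv_minimal N \<delta> u v j \<longleftrightarrow> \<not> (\<exists>i \<in> Sig N. prec N \<delta> u v i j)"

definition gasket_automaton ::
  "nat \<Rightarrow> int \<Rightarrow> int \<Rightarrow> int \<Rightarrow> (state \<Rightarrow> int \<times> int \<Rightarrow> state) \<Rightarrow> bool" where
  "gasket_automaton N a b c \<delta> \<longleftrightarrow>
     triangle_automaton N a b c \<delta> \<and>
     \<comment> \<open>Uniqueness\<close>
     (\<forall>u \<in> corners a b c. \<forall>v \<in> corners a b c. u \<noteq> v \<longrightarrow>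
        (\<forall>i j j'. prec N \<delta> u v i j \<and> prec N \<delta> u v i j' \<longrightarrow> j = j')) \<and>
     \<comment> \<open>Gathering\<close>
     (\<forall>x \<in> Sig N. \<forall>y \<in> Sig N. \<forall>z \<in> Sig N.
        (prec N \<delta> a c x z \<and> prec N \<delta> b c x y \<longrightarrow> prec N \<delta> a b y z) \<and>
        (prec N \<delta> a c x z \<and> prec N \<delta> a b y z \<longrightarrow> prec N \<delta> b c x y) \<and>
        (prec N \<delta> b c x y \<and> prec N \<delta> a b y z \<longrightarrow> prec N \<delta> a c x z)) \<and>
     \<comment> \<open>Boundary\<close>
     (a \<in> Sig N \<longrightarrow> uv_minimal N \<delta> a c a \<and> uv_minimal N \<delta> a b a) \<and>
     (b \<in> Sig N \<longrightarrow> uv_minimal N \<delta> b c b \<and> uv_minimal N \<delta> b a b) \<and>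
     (c \<in> Sig N \<longrightarrow> uv_minimal N \<delta> c a c \<and> uv_minimal N \<delta> c b c)"

(* Infinite words over Sigma, 0-indexed: x k is the (k+1)-st letter x_{k+1}. *)
definition words :: "nat \<Rightarrow> (nat \<Rightarrow> int) set" where
  "words N = {x. \<forall>k. x k \<in> Sig N}"

primrec itin :: "(state \<Rightarrow> int \<times> int \<Rightarrow> state) \<Rightarrow> (nat \<Rightarrow> int) \<Rightarrow> (nat \<Rightarrow> int) \<Rightarrow> nat \<Rightarrow> state" where
  "itin \<delta> x y 0 = Id"
| "itin \<delta> x y (Suc k) = (if itin \<delta> x y k = Exit then Exit else \<delta> (itin \<delta> x y k) (x k, y k))"

definition surv :: "(state \<Rightarrow> int \<times> int \<Rightarrow> state) \<Rightarrow> (nat \<Rightarrow> int) \<Rightarrow> (nat \<Rightarrow> int) \<Rightarrow> enat" where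
  "surv \<delta> x y = (if \<exists>k. itin \<delta> x y k = Exit
                  then enat (GREATEST k. itin \<delta> x y k \<noteq> Exit) else \<infinity>)"

end

theory Submission
  imports Defs
begin

(* A pair of words keeps the automaton in Id while the words agree; at their first disagreement p
   it enters some S_uv and then survives exactly as long as the pair reads (v, u).
   Suppose (x, y) and (x, z) both survive n + 1 steps, with first disagreements p <= q.
   If q >= n, then z agrees with x before n, and (y, z) runs like (y, x).  Otherwise Boundary
   forces p = q: for p < q the letter x q = v would have to be the second label of the state
   that (x, z) enters at q.  With p = q both pairs enter states with the same second label;
   if they coincide, Uniqueness gives y p = z p and (y, z) is still in Id at time n,
   otherwise Gathering sends (y, z) at time p into the state S_{u'u}, which it keeps, since
   afterwards y reads u and z reads u'. *)

lemma words_letter: "x \<in> words N \<Longrightarrow> x k \<in> Sig N"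
  by (simp add: words_def)

lemma itin_cong:
  assumes "\<forall>k<n. x k = x' k \<and> y k = y' k"
  shows "itin \<delta> x y n = itin \<delta> x' y' n"
  using assms by (induction n) auto

lemma itin_Exit_mono:
  assumes "itin \<delta> x y m = Exit" and "m \<le> n"
  shows "itin \<delta> x y n = Exit"
  using assms(2) by (induction n rule: dec_induct) (use assms(1) in auto)

lemma surv_le_enat_iff: "surv \<delta> x y \<le> enat k \<longleftrightarrow> itin \<delta> x y (Suc k) = Exit"
proof -
  let ?alive = "\<lambda>j. itin \<delta> x y j \<noteq> Exit"
  have alive_0: "?alive 0"
    by simp
  have surv_eq: "surv \<delta> x y = enat (Greatest ?alive)" if "itin \<delta> x y m = Exit" for m
    unfolding surv_def using that by (intro if_P) blast
  have alive_le: "j \<le> m" if "itin \<delta> x y (Suc m) = Exit" "?alive j" for j m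
    using that itin_Exit_mono[of \<delta> x y "Suc m" j] by fastforce
  show ?thesis
  proof
    assume le: "surv \<delta> x y \<le> enat k"
    then obtain m where "itin \<delta> x y m = Exit"
      by (auto simp: surv_def split: if_splits)
    then have dead: "itin \<delta> x y (Suc m) = Exit"
      by simp
    have "Greatest ?alive \<le> k"
      using le surv_eq[OF dead] by simp
    moreover have "?alive j \<Longrightarrow> j \<le> Greatest ?alive" for j
      using Greatest_le_nat[of ?alive j m] alive_le[OF dead] by blast
    ultimately show "itin \<delta> x y (Suc k) = Exit"
      by fastforce
  next
    assume dead: "itin \<delta> x y (Suc k) = Exit"
    have "Greatest ?alive \<le> k"
      using GreatestI_nat[of ?alive 0 k] alive_0 alive_le[OF dead] by blast
    then show "surv \<delta> x y \<le> enat k"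
      using surv_eq[OF dead] by simp
  qed
qed

definition diverges_at ::
  "(state \<Rightarrow> int \<times> int \<Rightarrow> state) \<Rightarrow> (nat \<Rightarrow> int) \<Rightarrow> (nat \<Rightarrow> int) \<Rightarrow> nat \<Rightarrow> int \<Rightarrow> int \<Rightarrow> nat \<Rightarrow> bool"
  where "diverges_at \<delta> x y p u v n \<longleftrightarrow>
    (\<forall>k<p. x k = y k) \<and> \<delta> Id (x p, y p) = S u v \<and> (\<forall>k. p < k \<and> k < n \<longrightarrow> x k = v \<and> y k = u)"

locale triangle =
  fixes N :: nat and a b c :: int and \<delta> :: "state \<Rightarrow> int \<times> int \<Rightarrow> state"
  assumes triangle: "triangle_automaton N a b c \<delta>"
begin

lemma step_in_Qset: "q \<in> Qset a b c \<Longrightarrow> i \<in> Sig N \<Longrightarrow> j \<in> Sig N \<Longrightarrow> \<delta> q (i, j) \<in> Qset a b c"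
  using triangle unfolding triangle_automaton_def by blast

lemma Id_step_eq_Id_iff: "i \<in> Sig N \<Longrightarrow> j \<in> Sig N \<Longrightarrow> \<delta> Id (i, j) = Id \<longleftrightarrow> i = j"
  using triangle unfolding triangle_automaton_def by blast

lemma Id_step_swap: "i \<in> Sig N \<Longrightarrow> j \<in> Sig N \<Longrightarrow> \<delta> Id (i, j) = S u v \<Longrightarrow> \<delta> Id (j, i) = S v u"
  using triangle unfolding triangle_automaton_def by blast

lemma Id_step_S_corners:
  assumes "i \<in> Sig N" "j \<in> Sig N" "\<delta> Id (i, j) = S u v"
  shows "u \<in> corners a b c" "v \<in> corners a b c" "u \<noteq> v"
  using step_in_Qset[of Id i j] assms by (auto simp: Qset_def)

lemma S_step:
  "u \<in> corners a b c \<Longrightarrow> v \<in> corners a b c \<Longrightarrow> u \<noteq> v \<Longrightarrow> i \<in> Sig N \<Longrightarrow> j \<in> Sig N \<Longrightarrow>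
   \<delta> (S u v) (i, j) = (if (i, j) = (v, u) then S u v else Exit)"
  using triangle unfolding triangle_automaton_def by blast

context
  fixes x y :: "nat \<Rightarrow> int"
  assumes x: "x \<in> words N" and y: "y \<in> words N"
begin

lemma itin_in_Qset: "itin \<delta> x y n \<in> Qset a b c"
proof (induction n)
  case 0
  show ?case by (simp add: Qset_def)
next
  case (Suc n)
  moreover have "Exit \<in> Qset a b c"
    by (simp add: Qset_def)
  ultimately show ?case
    using step_in_Qset words_letter[OF x] words_letter[OF y] by simp
qed

lemma itin_cases:
  obtains "itin \<delta> x y n = Id" | "itin \<delta> x y n = Exit"
  | u v where "itin \<delta> x y n = S u v" "u \<in> corners a b c" "v \<in> corners a b c" "u \<noteq> v"
  using itin_in_Qset[of n] unfolding Qset_def by blast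

lemma itin_Suc_eq_Id_iff: "itin \<delta> x y (Suc n) = Id \<longleftrightarrow> itin \<delta> x y n = Id \<and> x n = y n"
  by (cases rule: itin_cases[of n]) (use Id_step_eq_Id_iff S_step words_letter[OF x] words_letter[OF y] in auto)

lemma itin_Suc_eq_S_iff:
  "itin \<delta> x y (Suc n) = S u v \<longleftrightarrow>
    itin \<delta> x y n = Id \<and> \<delta> Id (x n, y n) = S u v \<or> itin \<delta> x y n = S u v \<and> x n = v \<and> y n = u"
  by (cases rule: itin_cases[of n]) (use S_step words_letter[OF x] words_letter[OF y] in auto)

lemma itin_eq_Id_iff: "itin \<delta> x y n = Id \<longleftrightarrow> (\<forall>k<n. x k = y k)"
  by (induction n) (auto simp del: itin.simps(2) simp: itin_Suc_eq_Id_iff All_less_Suc)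

lemma itin_eq_S_iff: "itin \<delta> x y n = S u v \<longleftrightarrow> (\<exists>p<n. diverges_at \<delta> x y p u v n)"
proof (induction n)
  case 0
  show ?case by simp
next
  case (Suc n)
  have extend: "diverges_at \<delta> x y p u v (Suc n) \<longleftrightarrow> diverges_at \<delta> x y p u v n \<and> x n = v \<and> y n = u"
    if "p < n" for p
    using that by (auto simp: diverges_at_def less_Suc_eq)
  have "(\<exists>p<Suc n. diverges_at \<delta> x y p u v (Suc n)) \<longleftrightarrow>
      diverges_at \<delta> x y n u v (Suc n) \<or> (\<exists>p<n. diverges_at \<delta> x y p u v n) \<and> x n = v \<and> y n = u"
    using extend by (auto simp: Ex_less_Suc)
  also have "\<dots> \<longleftrightarrow> itin \<delta> x y (Suc n) = S u v"
    unfolding itin_Suc_eq_S_iff Suc.IH itin_eq_Id_iff by (auto simp: diverges_at_def)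
  finally show ?case ..
qed

lemma itin_not_Exit_cases:
  assumes "itin \<delta> x y n \<noteq> Exit"
  obtains "\<forall>k<n. x k = y k" | p u v where "p < n" "diverges_at \<delta> x y p u v n"
  using assms itin_eq_Id_iff itin_eq_S_iff by (cases rule: itin_cases[of n]) auto

end

lemma diverges_at_swap:
  assumes "x \<in> words N" "y \<in> words N" "diverges_at \<delta> x y p u v n"
  shows "diverges_at \<delta> y x p v u n"
  using assms Id_step_swap[of "x p" "y p" u v] by (auto simp: diverges_at_def words_def)

lemma itin_swap_not_Exit:
  assumes x: "x \<in> words N" and y: "y \<in> words N" and alive: "itin \<delta> x y n \<noteq> Exit"
  shows "itin \<delta> y x n \<noteq> Exit"
  using itin_not_Exit_cases[OF x y alive]
proof cases
  case 1
  then have "itin \<delta> y x n = Id"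
    using itin_eq_Id_iff[OF y x] by auto
  then show ?thesis by simp
next
  case (2 p u v)
  then have "itin \<delta> y x n = S v u"
    using itin_eq_S_iff[OF y x] diverges_at_swap[OF x y] by blast
  then show ?thesis by simp
qed

end

locale gasket =
  fixes N :: nat and a b c :: int and \<delta> :: "state \<Rightarrow> int \<times> int \<Rightarrow> state"
  assumes gasket: "gasket_automaton N a b c \<delta>"

sublocale gasket \<subseteq> triangle
  using gasket by unfold_locales (simp add: gasket_automaton_def)

context gasket
begin

lemma prec_unique:
  assumes "u \<in> corners a b c" "v \<in> corners a b c" "u \<noteq> v" "prec N \<delta> u v i j" "prec N \<delta> u v i j'"
  shows "j = j'"
  using gasket assms unfolding gasket_automaton_def by blast

lemma
  assumes "x \<in> Sig N" "y \<in> Sig N" "z \<in> Sig N"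
  shows gather_ab: "prec N \<delta> a c x z \<Longrightarrow> prec N \<delta> b c x y \<Longrightarrow> prec N \<delta> a b y z"
    and gather_bc: "prec N \<delta> a c x z \<Longrightarrow> prec N \<delta> a b y z \<Longrightarrow> prec N \<delta> b c x y"
    and gather_ac: "prec N \<delta> b c x y \<Longrightarrow> prec N \<delta> a b y z \<Longrightarrow> prec N \<delta> a c x z"
  using gasket assms unfolding gasket_automaton_def by blast+

lemma prec_swap: "prec N \<delta> u v i j \<longleftrightarrow> prec N \<delta> v u j i"
  unfolding prec_def using Id_step_swap by blast

lemma corner_letter_minimal:
  assumes "u \<in> corners a b c" "v \<in> corners a b c" "u \<noteq> v" "v \<in> Sig N"
  shows "uv_minimal N \<delta> v u v"
proof -
  have boundary:
    "(a \<in> Sig N \<longrightarrow> uv_minimal N \<delta> a c a \<and> uv_minimal N \<delta> a b a) \<and>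
     (b \<in> Sig N \<longrightarrow> uv_minimal N \<delta> b c b \<and> uv_minimal N \<delta> b a b) \<and>
     (c \<in> Sig N \<longrightarrow> uv_minimal N \<delta> c a c \<and> uv_minimal N \<delta> c b c)"
    using gasket unfolding gasket_automaton_def by blast
  have "v = a \<or> v = b \<or> v = c" "u = a \<or> u = b \<or> u = c"
    using assms(1,2) by (auto simp: corners_def)
  then show ?thesis
    using boundary assms(3,4) by (elim disjE) simp_all
qed

lemma Id_step_S_fst_neq:
  assumes "i \<in> Sig N" "j \<in> Sig N" "\<delta> Id (i, j) = S u v"
  shows "i \<noteq> v"
proof
  assume "i = v"
  then have "prec N \<delta> v u j v"
    using assms Id_step_swap[OF assms] by (simp add: prec_def)
  moreover have "uv_minimal N \<delta> v u v"
    using corner_letter_minimal Id_step_S_corners[OF assms] assms(1) \<open>i = v\<close> by blast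
  ultimately show False
    using assms(2) by (simp add: uv_minimal_def)
qed

lemma Id_step_unique:
  assumes "i \<in> Sig N" "j \<in> Sig N" "j' \<in> Sig N" "\<delta> Id (i, j) = S u v" "\<delta> Id (i, j') = S u v"
  shows "j = j'"
proof -
  have "prec N \<delta> u v i j" "prec N \<delta> u v i j'"
    using assms by (simp_all add: prec_def)
  then show ?thesis
    using prec_unique Id_step_S_corners[OF assms(1,2,4)] by blast
qed

lemma Id_step_gather:
  assumes letters: "i \<in> Sig N" "j \<in> Sig N" "k \<in> Sig N"
    and steps: "\<delta> Id (i, j) = S u v" "\<delta> Id (i, k) = S u' v" and "u \<noteq> u'"
  shows "\<delta> Id (j, k) = S u' u"
proof -
  have prec: "prec N \<delta> u v i j" "prec N \<delta> u' v i k"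
    using letters steps by (simp_all add: prec_def)
  have "u \<in> corners a b c" "u' \<in> corners a b c" "v \<in> corners a b c" "u \<noteq> v" "u' \<noteq> v"
    using Id_step_S_corners letters steps by blast+
  \<comment> \<open>each ordering of the corners is one clause of Gathering, read through \<open>prec_swap\<close>\<close>
  with \<open>u \<noteq> u'\<close> consider
      "v = c" "u = b" "u' = a" | "v = c" "u = a" "u' = b" | "v = a" "u = b" "u' = c"
    | "v = a" "u = c" "u' = b" | "v = b" "u = a" "u' = c" | "v = b" "u = c" "u' = a"
    unfolding corners_def by blast
  then have "prec N \<delta> u' u j k"
  proof cases
    case 1
    then show ?thesis
      using prec gather_ab[OF letters(1,2,3)] by simp
  next
    case 2
    then show ?thesis
      using prec gather_ab[OF letters(1,3,2)] prec_swap[of b a j k] by simp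
  next
    case 3
    then show ?thesis
      using prec gather_bc[OF letters(3,2,1)] prec_swap[of b a i j] prec_swap[of c a i k]
        prec_swap[of c b j k] by simp
  next
    case 4
    then show ?thesis
      using prec gather_bc[OF letters(2,3,1)] prec_swap[of c a i j] prec_swap[of b a i k] by simp
  next
    case 5
    then show ?thesis
      using prec gather_ac[OF letters(3,1,2)] prec_swap[of c b i k] prec_swap[of c a j k] by simp
  next
    case 6
    then show ?thesis
      using prec gather_ac[OF letters(2,1,3)] prec_swap[of c b i j] by simp
  qed
  then show ?thesis
    by (simp add: prec_def)
qed

context
  fixes x y z :: "nat \<Rightarrow> int"
  assumes x: "x \<in> words N" and y: "y \<in> words N" and z: "z \<in> words N"
begin

lemma itin_not_Exit_if_diverges_at:
  assumes xy: "diverges_at \<delta> x y p u v (Suc n)" and xz: "diverges_at \<delta> x z q u' v' (Suc n)"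
    and "p \<le> q" "q < Suc n"
  shows "itin \<delta> y z n \<noteq> Exit"
proof (cases "q < n")
  case False
  then have "itin \<delta> y z n = itin \<delta> y x n"
    using xz by (intro itin_cong) (simp add: diverges_at_def)
  moreover have "itin \<delta> x y (Suc n) = S u v"
    unfolding itin_eq_S_iff[OF x y] using xy assms(3,4) le_less_trans by blast
  then have "itin \<delta> x y n \<noteq> Exit"
    by auto
  ultimately show ?thesis
    using itin_swap_not_Exit[OF x y] by simp
next
  case True
  note letters = words_letter[OF x] words_letter[OF y] words_letter[OF z]
  have x_Suc_q: "x (Suc q) = v'"
    using xz \<open>q < n\<close> by (simp add: diverges_at_def)
  have "p = q"
  proof (rule ccontr)
    assume "p \<noteq> q"
    then have "x q = v'"
      using xy assms(3) \<open>q < n\<close> x_Suc_q by (simp add: diverges_at_def)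
    moreover have "\<delta> Id (x q, z q) = S u' v'"
      using xz by (simp add: diverges_at_def)
    ultimately show False
      using Id_step_S_fst_neq[OF letters(1,3)] by blast
  qed
  then have "v' = v"
    using xy \<open>q < n\<close> x_Suc_q by (simp add: diverges_at_def)
  have steps: "\<delta> Id (x p, y p) = S u v" "\<delta> Id (x p, z p) = S u' v"
    using xy xz \<open>p = q\<close> \<open>v' = v\<close> by (simp_all add: diverges_at_def)
  show ?thesis
  proof (cases "u' = u")
    case True
    then have "y p = z p"
      using Id_step_unique[OF letters(1,2,3)] steps by blast
    have "y k = z k" if "k < n" for k
      using xy xz \<open>y p = z p\<close> \<open>p = q\<close> True that
      by (cases k p rule: linorder_cases) (auto simp: diverges_at_def)
    then have "itin \<delta> y z n = Id"
      using itin_eq_Id_iff[OF y z] by blast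
    then show ?thesis
      by simp
  next
    case False
    then have "\<delta> Id (y p, z p) = S u' u"
      using Id_step_gather[OF letters(1,2,3) steps] by blast
    then have "diverges_at \<delta> y z p u' u n"
      using xy xz \<open>p = q\<close> by (auto simp: diverges_at_def)
    then have "itin \<delta> y z n = S u' u"
      using itin_eq_S_iff[OF y z] \<open>p = q\<close> \<open>q < n\<close> by blast
    then show ?thesis
      by simp
  qed
qed

end

lemma itin_not_Exit_ultrametric:
  assumes x: "x \<in> words N" and y: "y \<in> words N" and z: "z \<in> words N"
    and xy: "itin \<delta> x y (Suc n) \<noteq> Exit" and xz: "itin \<delta> x z (Suc n) \<noteq> Exit"
  shows "itin \<delta> y z n \<noteq> Exit"
  using itin_not_Exit_cases[OF x y xy]
proof cases
  case 1
  then have "itin \<delta> y z n = itin \<delta> x z n"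
    by (intro itin_cong) auto
  then show ?thesis
    using xz by auto
next
  case xy_diverge: (2 p u v)
  from itin_not_Exit_cases[OF x z xz] show ?thesis
  proof cases
    case 1
    then have "itin \<delta> y z n = itin \<delta> y x n"
      by (intro itin_cong) auto
    moreover have "itin \<delta> x y n \<noteq> Exit"
      using xy by auto
    ultimately show ?thesis
      using itin_swap_not_Exit[OF x y] by simp
  next
    case xz_diverge: (2 q u' v')
    show ?thesis
    proof (cases "p \<le> q")
      case True
      then show ?thesis
        using itin_not_Exit_if_diverges_at[OF x y z] xy_diverge xz_diverge by blast
    next
      case False
      then have "itin \<delta> z y n \<noteq> Exit"
        using itin_not_Exit_if_diverges_at[OF x z y] xy_diverge xz_diverge by fastforce
      then show ?thesis
        using itin_swap_not_Exit[OF z y] by simp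
    qed
  qed
qed

end

theorem proposition3p1:
  fixes N :: nat and a b c :: int and \<delta> :: "state \<Rightarrow> int \<times> int \<Rightarrow> state"
    and x y z :: "nat \<Rightarrow> int"
  assumes "gasket_automaton N a b c \<delta>"
    and "x \<in> words N" and "y \<in> words N" and "z \<in> words N"
  shows "min (surv \<delta> x y) (surv \<delta> x z) \<le> surv \<delta> y z + 1"
proof (cases "surv \<delta> y z")
  case (enat t)
  interpret gasket N a b c \<delta>
    using assms(1) by (rule gasket.intro)
  have "itin \<delta> y z (Suc t) = Exit"
    using surv_le_enat_iff[of \<delta> y z t] enat by simp
  then have "itin \<delta> x y (Suc (Suc t)) = Exit \<or> itin \<delta> x z (Suc (Suc t)) = Exit"
    using itin_not_Exit_ultrametric[OF assms(2-4)] by blast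
  then have "min (surv \<delta> x y) (surv \<delta> x z) \<le> enat (Suc t)"
    by (auto simp: surv_le_enat_iff min_le_iff_disj)
  then show ?thesis
    using enat by (simp add: eSuc_enat[symmetric] eSuc_plus_1)
qed simp

end
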